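(* Let $\chi,\psi$ be central characters of $U(\mathfrak{gl}_t)$ and suppose $$\chi(u)-\psi(u)=\sum_{i=1}^re^{b_iu}-\sum_{j=1}^se^{(c_j-1)u}$$ for some $b_1,\ldots,b_r,c_1,\ldots,c_s\in\mathbb C$. Then there exist central characters $\chi^{(n)},\psi^{(n)}$ of $U(\mathfrak{gl}_n(\Bbbk))$ with $\chi=\prod_{\mathcal F}\chi^{(n)}$ and $\psi=\prod_{\mathcal F}\psi^{(n)}$ such that for every $n>r+s$ there is a weight $\lambda^{(n)}\in\Bbbk^n$ with $U(\mathfrak{gl}_n(\Bbbk))$ acting on $M_{\lambda^{(n)}}$ by the central character $\chi^{(n)}$ and acting on $M_{\mu^{(n)}}$ by $\psi^{(n)}$, where $\mu^{(n)}=\lambda^{(n)}-e_1-\cdots-e_r+e_{n-s+1}+\cdots+e_n$.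
   Context: $\Bbbk=\overline{\mathbb Q}$; $\mathcal F$ is a fixed nonprincipal ultrafilter on $\mathbb N$ with a fixed field isomorphism $\prod_{\mathcal F}\Bbbk\simeq\mathbb C$, and $t$ is the image of $\prod_{\mathcal F}n$. $e_i$ is the $i$-th standard basis vector of $\Bbbk^n$. For $\mathfrak{gl}_n(\Bbbk)$, $M_\lambda=U(\mathfrak{gl}_n)\otimes_{U(\mathfrak b)}\Bbbk_{\lambda-\rho}$ ($\mathfrak b$ upper triangular Borel, $\rho$ half-sum of positive roots) and $C_k$ ($k\ge1$) is the central element acting on every $M_\lambda$ by $\sum_i\lambda_i^k$. In $U(\mathfrak{gl}_t)$ (universal enveloping algebra of $\mathfrak{gl}_t=V\otimes V^*$ in Deligne's category $\operatorname{Rep}(GL_t)$, realized as an ultraproduct of the $U(\mathfrak{gl}_n(\Bbbk))$), $C_k=\prod_{\mathcal F}C_k$ and $Z(U(\mathfrak{gl}_t))=\mathbb C[C_1,C_2,\ldots]$; a central character is determined by arbitrary values $\psi_k=\psi(C_k)$, and $\psi=\prod_{\mathcal F}\psi^{(n)}$ means $\psi_k=\prod_{\mathcal F}\psi^{(n)}(C_k)$ for all $k$. Generating function: $\psi(u)=\frac{1}{e^u-1}\sum_{k\ge0}\frac{\psi_k}{k!}u^k$, $\psi_0:=1$ (formal factor); so the hypothesis means $\chi_k-\psi_k=\sum_i((b_i+1)^k-b_i^k)+\sum_j((c_j-1)^k-c_j^k)$ for all $k\ge1$. *)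

theory Defs
  imports Complex_Main "HOL-Computational_Algebra.Polynomial"
begin

text \<open>The field \<Bbbk> = algebraic closure of Q is realised as the algebraic numbers inside the complex numbers.\<close>

definition alg_seqs :: "(nat \<Rightarrow> complex) set" where
  "alg_seqs = {x. \<forall>n. algebraic (x n)}"

definition nonprincipal_ultrafilter :: "nat filter \<Rightarrow> bool" where
  "nonprincipal_ultrafilter F \<longleftrightarrow>
     F \<noteq> bot \<and>
     (\<forall>P. eventually P F \<or> eventually (\<lambda>n. \<not> P n) F) \<and>
     (\<forall>m. eventually (\<lambda>n. n \<noteq> m) F)"

text \<open>A field isomorphism from the ultraproduct of copies of \<Bbbk> (along F) onto the complex numbers,
  presented as a map on representing sequences: it identifies exactly the sequences that agree
  F-almost everywhere, is additive and multiplicative, sends 1 to 1 and is onto.\<close>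

definition ultraproduct_iso :: "nat filter \<Rightarrow> ((nat \<Rightarrow> complex) \<Rightarrow> complex) \<Rightarrow> bool" where
  "ultraproduct_iso F \<Phi> \<longleftrightarrow>
     (\<forall>x\<in>alg_seqs. \<forall>y\<in>alg_seqs. \<Phi> x = \<Phi> y \<longleftrightarrow> eventually (\<lambda>n. x n = y n) F) \<and>
     (\<forall>x\<in>alg_seqs. \<forall>y\<in>alg_seqs. \<Phi> (\<lambda>n. x n + y n) = \<Phi> x + \<Phi> y) \<and>
     (\<forall>x\<in>alg_seqs. \<forall>y\<in>alg_seqs. \<Phi> (\<lambda>n. x n * y n) = \<Phi> x * \<Phi> y) \<and>
     \<Phi> (\<lambda>n. 1) = 1 \<and>
     \<Phi> ` alg_seqs = UNIV"

text \<open>The central character by which U(gl_n(\<Bbbk>)) acts on the Verma module M_\<lambda>,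
  recorded by its values on the central elements C_k: C_k acts by \<Sum>_i \<lambda>_i^k.
  Weights in \<Bbbk>^n are functions nat to complex, with coordinates 0,...,n-1 (coordinate i is \<lambda>_{i+1}).\<close>

definition verma_cc :: "nat \<Rightarrow> (nat \<Rightarrow> complex) \<Rightarrow> nat \<Rightarrow> complex" where
  "verma_cc n lam k = (\<Sum>i<n. lam i ^ k)"

definition weight :: "nat \<Rightarrow> (nat \<Rightarrow> complex) \<Rightarrow> bool" where
  "weight n lam \<longleftrightarrow> (\<forall>i<n. algebraic (lam i))"

text \<open>A central character of U(gl_n(\<Bbbk>)), recorded by its values c k on C_k (k \<ge> 1), which
  determine it. By Harish-Chandra (\<Bbbk> algebraically closed) these are exactly the characters
  by which some Verma module M_\<lambda> acts.\<close>

definition cc_gl :: "nat \<Rightarrow> (nat \<Rightarrow> complex) \<Rightarrow> bool" where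
  "cc_gl n c \<longleftrightarrow> (\<exists>lam. weight n lam \<and> (\<forall>k\<ge>1. c k = verma_cc n lam k))"

definition shift_weight :: "nat \<Rightarrow> nat \<Rightarrow> nat \<Rightarrow> (nat \<Rightarrow> complex) \<Rightarrow> nat \<Rightarrow> complex" where
  "shift_weight n r s lam i =
     lam i - (if i < r then 1 else 0) + (if n - s \<le> i then 1 else 0)"

end

(*
  Pick representatives of the numbers b_i + 1, c_j - 1 and \<chi>_k in the ultraproduct. At level n
  the weight \<lambda> carries the representatives of b_i + 1 in its first r coordinates and those of
  c_j - 1 in its last s coordinates; passing to \<mu> lowers the former and raises the latter by one,
  which changes every power sum by the finite analogue of the hypothesis on \<chi> - \<psi>. The
  coordinates in between are chosen so that the k-th power sum of \<lambda> is the representative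
  of \<chi>_k for all k up to the square root of n - r - s. This is possible because the k-th roots of
  unity scaled by a have l-th power sum k a^l if k divides l and 0 otherwise: scaling blocks of
  sizes 1, ..., N one after the other prescribes the first N power sums. Each fixed k is covered
  for almost all n, so both central characters are correct in the ultraproduct.
*)

theory Submission
  imports Defs "HOL-Algebra.Algebraic_Closure_Type" "HOL-Library.Discrete_Functions"
begin

section \<open>Closure properties of algebraic numbers\<close>

text \<open>The closure properties are transferred from HOL-Algebra, which shows that the elements
  algebraic over a subfield form a subfield, via the ring structure of the type.\<close>

context
  fixes K :: "'a :: field_char_0 ring"
  defines "K \<equiv> ring_of_type_algebra"
begin

interpretation K: field K
  unfolding K_def by rule

lemma ring_of_type_algebra_simps [simp]:
  "carrier K = UNIV" "mult K = (*)" "add K = (+)" "one K = 1" "zero K = 0"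
  by (simp_all add: K_def ring_of_type_algebra_def)

lemma ring_of_type_algebra_nat_pow [simp]: "x [^]\<^bsub>K\<^esub> (n::nat) = x ^ n"
  by (induction n) (simp_all add: mult.commute)

lemma ring_of_type_algebra_uminus [simp]: "\<ominus>\<^bsub>K\<^esub> x = - x"
  by (rule K.minus_equality) auto

lemma ring_of_type_algebra_eval: "K.eval l x = poly (Poly (rev l)) x"
proof (induction l)
  case (Cons a l)
  have "Poly (rev l @ [a]) = Poly (rev l) + Polynomial.monom a (length l)"
    by (simp add: Poly_snoc)
  with Cons show ?case
    by (simp add: poly_monom)
qed simp

lemma subfield_Rats_ring_of_type_algebra: "subfield \<rat> K"
proof (rule K.subfieldI')
  show "subring \<rat> K"
    by (rule K.subringI) auto
  show "inv\<^bsub>K\<^esub> q \<in> \<rat>" if "q \<in> \<rat> - {\<zero>\<^bsub>K\<^esub>}" for q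
    using that K.comm_inv_char[of q "inverse q"] by auto
qed

lemma algebraic_iff_algebraic_over_Rats: "algebraic x \<longleftrightarrow> (K.algebraic over \<rat>) x"
proof
  assume "algebraic x"
  then obtain p where p: "\<forall>i. Polynomial.coeff p i \<in> \<rat>" "p \<noteq> 0" "poly p x = 0"
    unfolding algebraic_altdef by blast
  have "rev (coeffs p) \<in> carrier (\<rat>[X]\<^bsub>K\<^esub>)"
    using p(1,2) by (auto simp: univ_poly_carrier[symmetric] polynomial_def hd_rev
        last_coeffs_eq_coeff_degree coeffs_def)
  with p show "(K.algebraic over \<rat>) x"
    by (intro K.algebraicI[of "rev (coeffs p)"]) (simp_all add: ring_of_type_algebra_eval)
next
  assume "(K.algebraic over \<rat>) x"
  then obtain l where l: "l \<in> carrier (\<rat>[X]\<^bsub>K\<^esub>)" "l \<noteq> []" "K.eval l x = 0"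
    using K.algebraicE[OF subfieldE(1)[OF subfield_Rats_ring_of_type_algebra]] by auto
  then have "set l \<subseteq> \<rat>" "hd l \<noteq> 0"
    by (auto simp: univ_poly_carrier[symmetric] polynomial_def)
  with l show "algebraic x"
    by (intro algebraicI'[of "Poly (rev l)"])
       (auto simp: ring_of_type_algebra_eval nth_default_def Poly_eq_0 rev_swap intro!: subsetD[OF _ nth_mem])
qed

lemma algebraic_add [simp]: "algebraic (x :: 'a) \<Longrightarrow> algebraic y \<Longrightarrow> algebraic (x + y)"
  and algebraic_mult [simp]: "algebraic (x :: 'a) \<Longrightarrow> algebraic y \<Longrightarrow> algebraic (x * y)"
proof -
  let ?A = "{x \<in> carrier K. (K.algebraic over \<rat>) x}"
  have A: "subring ?A K"
    using subfieldE(1)[OF K.subfield_of_algebraics[OF subfield_Rats_ring_of_type_algebra]] .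
  assume "algebraic x" "algebraic y"
  then have "x \<in> ?A" "y \<in> ?A"
    by (simp_all add: algebraic_iff_algebraic_over_Rats)
  from subringE(6,7)[OF A this] show "algebraic (x + y)" "algebraic (x * y)"
    by (simp_all add: algebraic_iff_algebraic_over_Rats)
qed

end

lemma algebraic_diff [simp]: "algebraic x \<Longrightarrow> algebraic y \<Longrightarrow> algebraic (x - y)"
  using algebraic_add[of x "- y"] by simp

lemma algebraic_divide [simp]: "algebraic x \<Longrightarrow> algebraic y \<Longrightarrow> algebraic (x / y)"
  using algebraic_mult[of x "inverse y"] by (simp add: divide_inverse algebraic_inverse)

lemma algebraic_power [simp]: "algebraic x \<Longrightarrow> algebraic (x ^ n)"
  by (induction n) simp_all

lemma algebraic_sum_list [simp]: "(\<And>x. x \<in> set xs \<Longrightarrow> algebraic (f x)) \<Longrightarrow> algebraic (\<Sum>x\<leftarrow>xs. f x)"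
  by (induction xs) simp_all

lemma algebraic_sum [simp]: "(\<And>i. i \<in> A \<Longrightarrow> algebraic (f i)) \<Longrightarrow> algebraic (sum f A)"
  by (induction A rule: infinite_finite_induct) simp_all

lemma algebraic_nth_root: "0 < k \<Longrightarrow> w ^ k = z \<Longrightarrow> algebraic z \<Longrightarrow> algebraic w"
  by (rule algebraic_root[of z "Polynomial.monom 1 k"])
     (auto simp: poly_monom degree_monom_eq Polynomial.coeff_monom)

lemma complex_nth_root_exists: "0 < k \<Longrightarrow> \<exists>w::complex. w ^ k = z"
proof (cases "z = 0")
  case False
  moreover assume "0 < k"
  ultimately have "card {w. w ^ k = z} = k"
    by (rule card_nth_roots)
  with \<open>0 < k\<close> have "{w. w ^ k = z} \<noteq> {}"
    by (intro notI) simp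
  then show ?thesis
    by blast
qed simp

section \<open>Prescribing finitely many power sums\<close>

lemma cis_2pi_fraction_eq_1_iff:
  fixes k l :: nat
  assumes "0 < k"
  shows "cis (2 * pi * l / k) = 1 \<longleftrightarrow> k dvd l"
proof -
  have "cis (2 * pi * l / k) = 1 \<longleftrightarrow> (\<exists>n::int. 2 * pi * l / k = n * (2 * pi))"
    by (auto simp: complex_eq_iff cos_one_2pi_int mult.commute[of _ "2 * pi"])
  also have "\<dots> \<longleftrightarrow> (\<exists>n::int. real l = n * k)"
    using assms by (auto simp: field_simps)
  also have "\<dots> \<longleftrightarrow> k dvd l"
    by (metis dvd_def of_int_of_nat_eq of_int_eq_iff of_int_mult of_nat_mult mult.commute int_dvd_int_iff)
  finally show ?thesis .
qed

definition power_sum :: "'a :: semiring_1 list \<Rightarrow> nat \<Rightarrow> 'a" where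
  "power_sum xs k = (\<Sum>x\<leftarrow>xs. x ^ k)"

lemma power_sum_append [simp]: "power_sum (xs @ ys) k = power_sum xs k + power_sum ys k"
  by (simp add: power_sum_def)

lemma power_sum_concat: "power_sum (concat xss) k = (\<Sum>xs\<leftarrow>xss. power_sum xs k)"
  by (induction xss) (simp_all add: power_sum_def)

lemma power_sum_replicate_0 [simp]: "0 < k \<Longrightarrow> power_sum (replicate m 0) k = 0"
  by (simp add: power_sum_def sum_list_replicate zero_power)

lemma algebraic_power_sum: "(\<And>x. x \<in> set xs \<Longrightarrow> algebraic x) \<Longrightarrow> algebraic (power_sum xs k)"
  by (simp add: power_sum_def)

definition root_block :: "complex \<Rightarrow> nat \<Rightarrow> complex list" where
  "root_block a k = map (\<lambda>j. a * cis (2 * pi * j / k)) [0..<k]"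

lemma length_root_block [simp]: "length (root_block a k) = k"
  by (simp add: root_block_def)

lemma algebraic_root_block:
  assumes "algebraic a" "x \<in> set (root_block a k)"
  shows "algebraic x"
proof -
  obtain j where j: "j < k" "x = a * cis (2 * pi * j / k)"
    using assms(2) by (auto simp: root_block_def)
  have "cis (2 * pi * j / k) ^ k = 1"
    using j(1) by (simp add: DeMoivre cis_2pi_fraction_eq_1_iff[symmetric])
  then have "algebraic (cis (2 * pi * j / k))"
    using j(1) algebraic_nth_root[of k _ 1] by simp
  with assms(1) j(2) show ?thesis
    by simp
qed

lemma power_sum_root_block:
  assumes "0 < k"
  shows "power_sum (root_block a k) l = (if k dvd l then of_nat k * a ^ l else 0)"
proof -
  define \<zeta> where "\<zeta> = cis (2 * pi * l / k)"
  have "power_sum (root_block a k) l = a ^ l * (\<Sum>j<k. \<zeta> ^ j)"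
    by (simp add: power_sum_def root_block_def \<zeta>_def power_mult_distrib DeMoivre
        sum_distrib_left interv_sum_list_conv_sum_set_nat atLeast0LessThan mult_ac)
  also have "(\<Sum>j<k. \<zeta> ^ j) = (if k dvd l then of_nat k else 0)"
  proof (cases "k dvd l")
    case True
    then have "\<zeta> = 1"
      using assms by (simp add: \<zeta>_def cis_2pi_fraction_eq_1_iff)
    with True show ?thesis
      by simp
  next
    case False
    then have "\<zeta> \<noteq> 1"
      using assms by (simp add: \<zeta>_def cis_2pi_fraction_eq_1_iff)
    moreover have "\<zeta> ^ k = 1"
      using assms by (simp add: \<zeta>_def DeMoivre cis_2pi_fraction_eq_1_iff[symmetric])
    ultimately show ?thesis
      using False by (simp add: geometric_sum)
  qed
  finally show ?thesis
    by simp
qed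

function block_amplitude :: "(nat \<Rightarrow> complex) \<Rightarrow> nat \<Rightarrow> complex" where
  "block_amplitude t l = (SOME a. of_nat l * a ^ l =
     t l - (\<Sum>k=1..<l. power_sum (root_block (block_amplitude t k) k) l))"
  by auto
termination
  by (relation "measure snd") auto

declare block_amplitude.simps [simp del]

lemma block_amplitude_eq:
  assumes "0 < l"
  shows "of_nat l * block_amplitude t l ^ l =
           t l - (\<Sum>k=1..<l. power_sum (root_block (block_amplitude t k) k) l)"
    (is "_ = ?c")
proof -
  obtain a where "a ^ l = ?c / of_nat l"
    using complex_nth_root_exists[OF assms] by blast
  then have "\<exists>a. of_nat l * a ^ l = ?c"
    using assms by (intro exI[of _ a]) simp
  then show ?thesis
    by (subst block_amplitude.simps) (rule someI_ex)
qed

lemma algebraic_block_amplitude: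
  assumes "\<And>l. algebraic (t l)" "0 < l"
  shows "algebraic (block_amplitude t l)"
  using assms(2)
proof (induction l rule: less_induct)
  case (less l)
  let ?c = "t l - (\<Sum>k=1..<l. power_sum (root_block (block_amplitude t k) k) l)"
  have "algebraic (power_sum (root_block (block_amplitude t k) k) l)" if "k \<in> {1..<l}" for k
    using that less.IH[of k] by (auto intro: algebraic_power_sum algebraic_root_block)
  then have "algebraic (\<Sum>k=1..<l. power_sum (root_block (block_amplitude t k) k) l)"
    by (rule algebraic_sum)
  then have "algebraic (?c / of_nat l)"
    using assms(1) by simp
  moreover have "block_amplitude t l ^ l = ?c / of_nat l"
    using block_amplitude_eq[OF less.prems, of t] less.prems by (simp add: field_simps)
  ultimately show ?case
    using less.prems algebraic_nth_root by blast
qed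

definition root_blocks :: "(nat \<Rightarrow> complex) \<Rightarrow> nat \<Rightarrow> complex list" where
  "root_blocks t N = concat (map (\<lambda>k. root_block (block_amplitude t k) k) [1..<Suc N])"

lemma length_root_blocks_le: "length (root_blocks t N) \<le> N\<^sup>2"
proof -
  have "length (root_blocks t N) = (\<Sum>k=1..<Suc N. k)"
    by (simp add: root_blocks_def length_concat o_def interv_sum_list_conv_sum_set_nat)
  also have "\<dots> \<le> (\<Sum>k=1..<Suc N. N)"
    by (rule sum_mono) simp
  finally show ?thesis
    by (simp add: power2_eq_square)
qed

lemma power_sum_root_blocks:
  assumes "1 \<le> l" "l \<le> N"
  shows "power_sum (root_blocks t N) l = t l"
proof -
  let ?p = "\<lambda>k. power_sum (root_block (block_amplitude t k) k) l"
  have "power_sum (root_blocks t N) l = (\<Sum>k=1..<Suc N. ?p k)"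
    by (simp add: root_blocks_def power_sum_concat o_def interv_sum_list_conv_sum_set_nat)
  also have "\<dots> = (\<Sum>k=1..<Suc l. ?p k)"
    using assms by (intro sum.mono_neutral_right) (auto simp: power_sum_root_block dest: dvd_imp_le)
  also have "\<dots> = (\<Sum>k=1..<l. ?p k) + of_nat l * block_amplitude t l ^ l"
    using assms by (simp add: power_sum_root_block)
  also have "\<dots> = t l"
    using assms by (simp add: block_amplitude_eq)
  finally show ?thesis .
qed

lemma exists_list_with_power_sums:
  fixes t :: "nat \<Rightarrow> complex"
  assumes "N\<^sup>2 \<le> m" "\<And>l. algebraic (t l)"
  shows "\<exists>xs. length xs = m \<and> (\<forall>x\<in>set xs. algebraic x) \<and> (\<forall>l\<in>{1..N}. power_sum xs l = t l)"
proof (intro exI conjI)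
  let ?xs = "root_blocks t N @ replicate (m - length (root_blocks t N)) 0"
  show "length ?xs = m"
    using length_root_blocks_le[of t N] assms(1) by simp
  have "algebraic x" if x: "x \<in> set (root_blocks t N)" for x
  proof -
    have "x \<in> (\<Union>k\<in>{1..N}. set (root_block (block_amplitude t k) k))"
      using x by (simp del: upt_Suc add: root_blocks_def atLeastLessThanSuc_atLeastAtMost)
    then obtain k where k: "0 < k" "x \<in> set (root_block (block_amplitude t k) k)"
      by (auto simp: Suc_le_eq)
    show ?thesis
      by (rule algebraic_root_block[OF algebraic_block_amplitude[OF assms(2) k(1)] k(2)])
  qed
  then show "\<forall>x\<in>set ?xs. algebraic x"
    by auto
  show "\<forall>l\<in>{1..N}. power_sum ?xs l = t l"
    by (simp add: power_sum_root_blocks)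
qed

section \<open>Verma weights\<close>

definition shift_defect :: "complex list \<Rightarrow> complex list \<Rightarrow> nat \<Rightarrow> complex" where
  "shift_defect bs cs k = (\<Sum>b\<leftarrow>bs. b ^ k - (b - 1) ^ k) + (\<Sum>c\<leftarrow>cs. c ^ k - (c + 1) ^ k)"

lemma verma_cc_cong: "(\<And>i. i < n \<Longrightarrow> lam i = lam' i) \<Longrightarrow> verma_cc n lam k = verma_cc n lam' k"
  by (simp add: verma_cc_def)

lemma verma_cc_nth: "length xs = n \<Longrightarrow> verma_cc n ((!) xs) k = power_sum xs k"
  by (simp add: verma_cc_def power_sum_def sum_list_sum_nth atLeast0LessThan)

lemma algebraic_verma_cc: "weight n lam \<Longrightarrow> algebraic (verma_cc n lam k)"
  unfolding verma_cc_def weight_def by (intro algebraic_sum algebraic_power) auto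

lemma weight_nth: "n \<le> length xs \<Longrightarrow> (\<And>x. x \<in> set xs \<Longrightarrow> algebraic x) \<Longrightarrow> weight n ((!) xs)"
  by (simp add: weight_def)

lemma weight_shift_weight: "weight n lam \<Longrightarrow> weight n (shift_weight n r s lam)"
  by (simp add: weight_def shift_weight_def)

lemma shift_weight_append:
  assumes "length (bs @ ms @ cs) = n" "i < n"
  shows "shift_weight n (length bs) (length cs) ((!) (bs @ ms @ cs)) i =
           (map (\<lambda>b. b - 1) bs @ ms @ map (\<lambda>c. c + 1) cs) ! i"
  using assms by (auto simp: shift_weight_def nth_append)

lemma verma_cc_diff_shift_weight_append:
  assumes "length (bs @ ms @ cs) = n"
  shows "verma_cc n ((!) (bs @ ms @ cs)) k -
           verma_cc n (shift_weight n (length bs) (length cs) ((!) (bs @ ms @ cs))) k =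
         shift_defect bs cs k"
proof -
  have "verma_cc n (shift_weight n (length bs) (length cs) ((!) (bs @ ms @ cs))) k =
          verma_cc n ((!) (map (\<lambda>b. b - 1) bs @ ms @ map (\<lambda>c. c + 1) cs)) k"
    using assms by (intro verma_cc_cong shift_weight_append)
  also have "\<dots> = power_sum (map (\<lambda>b. b - 1) bs @ ms @ map (\<lambda>c. c + 1) cs) k"
    using assms by (intro verma_cc_nth) simp
  finally show ?thesis
    using assms by (simp add: verma_cc_nth shift_defect_def power_sum_def o_def sum_list_subtractf)
qed

lemma weight_with_prescribed_power_sums:
  fixes bs cs :: "complex list" and p :: "nat \<Rightarrow> complex"
  assumes "\<forall>x\<in>set bs. algebraic x" "\<forall>x\<in>set cs. algebraic x" "\<forall>k. algebraic (p k)"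
  shows "\<exists>lam. weight n lam \<and>
           (\<forall>k. 1 \<le> k \<and> k\<^sup>2 + length bs + length cs \<le> n \<longrightarrow>
              verma_cc n lam k = p k \<and>
              verma_cc n lam k - verma_cc n (shift_weight n (length bs) (length cs) lam) k =
                shift_defect bs cs k)"
proof -
  define m where "m = n - length bs - length cs"
  \<comment> \<open>a list of length m can realise the first floor_sqrt m power sums\<close>
  define t where "t k = p k - power_sum bs k - power_sum cs k" for k
  have "algebraic (t k)" for k
    using assms by (simp add: t_def algebraic_power_sum)
  then have "\<exists>ms. length ms = m \<and> (\<forall>x\<in>set ms. algebraic x) \<and>
      (\<forall>k\<in>{1..floor_sqrt m}. power_sum ms k = t k)"
    by (intro exists_list_with_power_sums) simp_all
  then obtain ms where ms: "length ms = m" "\<forall>x\<in>set ms. algebraic x"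
      "\<forall>k\<in>{1..floor_sqrt m}. power_sum ms k = t k"
    by blast
  define xs where "xs = bs @ ms @ cs"
  have "weight n ((!) xs)"
    using assms(1,2) ms(1,2) by (intro weight_nth) (auto simp: xs_def m_def)
  moreover have "verma_cc n ((!) xs) k = p k \<and>
      verma_cc n ((!) xs) k - verma_cc n (shift_weight n (length bs) (length cs) ((!) xs)) k =
        shift_defect bs cs k"
    if "1 \<le> k" "k\<^sup>2 + length bs + length cs \<le> n" for k
  proof -
    have len: "length xs = n"
      using that ms(1) by (simp add: xs_def m_def)
    have "power_sum ms k = t k"
      using that ms(3) by (simp add: m_def le_floor_sqrtI)
    with len have "verma_cc n ((!) xs) k = p k"
      by (simp add: verma_cc_nth xs_def t_def)
    moreover have "verma_cc n ((!) xs) k -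
        verma_cc n (shift_weight n (length bs) (length cs) ((!) xs)) k = shift_defect bs cs k"
      using len unfolding xs_def by (rule verma_cc_diff_shift_weight_append)
    ultimately show ?thesis
      by blast
  qed
  ultimately show ?thesis
    by blast
qed

section \<open>The ultraproduct\<close>

lemma nonprincipal_ultrafilter_eventually_ge:
  assumes "nonprincipal_ultrafilter F"
  shows "eventually (\<lambda>n. m \<le> n) F"
proof (induction m)
  case (Suc m)
  moreover have "eventually (\<lambda>n. n \<noteq> m) F"
    using assms by (simp add: nonprincipal_ultrafilter_def)
  ultimately show ?case
    by eventually_elim auto
qed simp

lemma mem_alg_seqs [simp]: "x \<in> alg_seqs \<longleftrightarrow> (\<forall>n. algebraic (x n))"
  by (simp add: alg_seqs_def)

context
  fixes F :: "nat filter" and \<Phi> :: "(nat \<Rightarrow> complex) \<Rightarrow> complex"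
  assumes iso: "ultraproduct_iso F \<Phi>"
begin

lemma ultraproduct_iso_cong:
  "x \<in> alg_seqs \<Longrightarrow> y \<in> alg_seqs \<Longrightarrow> eventually (\<lambda>n. x n = y n) F \<Longrightarrow> \<Phi> x = \<Phi> y"
  using iso by (simp add: ultraproduct_iso_def)

lemma ultraproduct_iso_surj: "\<exists>x\<in>alg_seqs. \<Phi> x = z"
  using iso unfolding ultraproduct_iso_def by (metis UNIV_I imageE)

lemma ultraproduct_iso_add:
  "x \<in> alg_seqs \<Longrightarrow> y \<in> alg_seqs \<Longrightarrow> \<Phi> (\<lambda>n. x n + y n) = \<Phi> x + \<Phi> y"
  using iso unfolding ultraproduct_iso_def by blast

lemma ultraproduct_iso_mult:
  "x \<in> alg_seqs \<Longrightarrow> y \<in> alg_seqs \<Longrightarrow> \<Phi> (\<lambda>n. x n * y n) = \<Phi> x * \<Phi> y"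
  using iso unfolding ultraproduct_iso_def by blast

lemma ultraproduct_iso_one: "\<Phi> (\<lambda>n. 1) = 1"
  using iso by (simp add: ultraproduct_iso_def)

lemma ultraproduct_iso_zero: "\<Phi> (\<lambda>n. 0) = 0"
  using ultraproduct_iso_add[of "\<lambda>n. 0" "\<lambda>n. 0"] by simp

lemma ultraproduct_iso_diff:
  assumes "x \<in> alg_seqs" "y \<in> alg_seqs"
  shows "\<Phi> (\<lambda>n. x n - y n) = \<Phi> x - \<Phi> y"
proof -
  have "\<Phi> (\<lambda>n. x n - y n) + \<Phi> y = \<Phi> x"
    using assms ultraproduct_iso_add[of "\<lambda>n. x n - y n" y] by simp
  then show ?thesis
    by (simp add: eq_diff_eq)
qed

lemma ultraproduct_iso_power: "x \<in> alg_seqs \<Longrightarrow> \<Phi> (\<lambda>n. x n ^ k) = \<Phi> x ^ k"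
  by (induction k) (simp_all add: ultraproduct_iso_one ultraproduct_iso_mult)

lemma ultraproduct_iso_sum_list:
  "(\<And>a. a \<in> set as \<Longrightarrow> f a \<in> alg_seqs) \<Longrightarrow> \<Phi> (\<lambda>n. \<Sum>a\<leftarrow>as. f a n) = (\<Sum>a\<leftarrow>as. \<Phi> (f a))"
proof (induction as)
  case (Cons a as)
  then show ?case
    using ultraproduct_iso_add[of "f a" "\<lambda>n. \<Sum>a\<leftarrow>as. f a n"] by simp
qed (simp add: ultraproduct_iso_zero)

lemma ultraproduct_iso_shift_defect:
  assumes "\<And>b. x b \<in> alg_seqs" "\<And>c. y c \<in> alg_seqs"
  shows "\<Phi> (\<lambda>n. shift_defect (map (\<lambda>b. x b n) bs) (map (\<lambda>c. y c n) cs) k) =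
           shift_defect (map (\<lambda>b. \<Phi> (x b)) bs) (map (\<lambda>c. \<Phi> (y c)) cs) k"
  using assms
  by (simp add: shift_defect_def o_def ultraproduct_iso_add ultraproduct_iso_diff
      ultraproduct_iso_power ultraproduct_iso_sum_list ultraproduct_iso_one)

end

theorem corollary10:
  fixes F :: "nat filter" and \<Phi> :: "(nat \<Rightarrow> complex) \<Rightarrow> complex"
    and \<chi> \<psi> :: "nat \<Rightarrow> complex" and bs cs :: "complex list"
  assumes "nonprincipal_ultrafilter F"
    and "ultraproduct_iso F \<Phi>"
    and hyp: "\<forall>k\<ge>1. \<chi> k - \<psi> k =
               (\<Sum>b\<leftarrow>bs. (b + 1) ^ k - b ^ k) + (\<Sum>c\<leftarrow>cs. (c - 1) ^ k - c ^ k)"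
  shows "\<exists>\<chi>n \<psi>n :: nat \<Rightarrow> nat \<Rightarrow> complex.
           (\<forall>n. cc_gl n (\<chi>n n) \<and> cc_gl n (\<psi>n n)) \<and>
           (\<forall>k\<ge>1. \<chi> k = \<Phi> (\<lambda>n. \<chi>n n k) \<and> \<psi> k = \<Phi> (\<lambda>n. \<psi>n n k)) \<and>
           (\<forall>n > length bs + length cs. \<exists>lam. weight n lam \<and>
              (\<forall>k\<ge>1. \<chi>n n k = verma_cc n lam k \<and>
                      \<psi>n n k = verma_cc n (shift_weight n (length bs) (length cs) lam) k))"
proof -
  let ?r = "length bs" and ?s = "length cs"
  obtain rep where rep: "\<And>z. rep z \<in> alg_seqs" "\<And>z. \<Phi> (rep z) = z"
    using ultraproduct_iso_surj[OF assms(2)] by metis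
  define B where "B n = map (\<lambda>b. rep (b + 1) n) bs" for n
  define C where "C n = map (\<lambda>c. rep (c - 1) n) cs" for n
  have "\<exists>lam. weight n lam \<and> (\<forall>k. 1 \<le> k \<and> k\<^sup>2 + ?r + ?s \<le> n \<longrightarrow>
      verma_cc n lam k = rep (\<chi> k) n \<and>
      verma_cc n lam k - verma_cc n (shift_weight n ?r ?s lam) k = shift_defect (B n) (C n) k)" for n
    using weight_with_prescribed_power_sums[of "B n" "C n" "\<lambda>k. rep (\<chi> k) n" n] rep(1)
    by (simp add: B_def C_def)
  then obtain lam where lam: "\<And>n. weight n (lam n)"
    "\<And>n k. 1 \<le> k \<Longrightarrow> k\<^sup>2 + ?r + ?s \<le> n \<Longrightarrow> verma_cc n (lam n) k = rep (\<chi> k) n \<and>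
      verma_cc n (lam n) k - verma_cc n (shift_weight n ?r ?s (lam n)) k = shift_defect (B n) (C n) k"
    by metis
  define \<chi>n where "\<chi>n n = verma_cc n (lam n)" for n
  define \<psi>n where "\<psi>n n = verma_cc n (shift_weight n ?r ?s (lam n))" for n
  have lim: "\<chi> k = \<Phi> (\<lambda>n. \<chi>n n k) \<and> \<psi> k = \<Phi> (\<lambda>n. \<psi>n n k)" if k: "1 \<le> k" for k
  proof -
    have ev: "eventually (\<lambda>n. \<chi>n n k = rep (\<chi> k) n \<and> \<chi>n n k - \<psi>n n k = shift_defect (B n) (C n) k) F"
      unfolding \<chi>n_def \<psi>n_def
      using nonprincipal_ultrafilter_eventually_ge[OF assms(1), of "k\<^sup>2 + ?r + ?s"]
      by (rule eventually_mono) (rule lam(2)[OF k])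
    have alg: "(\<lambda>n. \<chi>n n k) \<in> alg_seqs" "(\<lambda>n. \<psi>n n k) \<in> alg_seqs"
      using lam(1) by (simp_all add: \<chi>n_def \<psi>n_def algebraic_verma_cc weight_shift_weight)
    have "\<Phi> (\<lambda>n. \<chi>n n k) = \<chi> k"
      using ultraproduct_iso_cong[OF assms(2) alg(1) rep(1) eventually_mono[OF ev]] rep(2) by auto
    moreover have "\<Phi> (\<lambda>n. \<chi>n n k - \<psi>n n k) = \<Phi> (\<lambda>n. shift_defect (B n) (C n) k)"
      using rep(1) alg ev
      by (intro ultraproduct_iso_cong[OF assms(2)]) (auto simp: B_def C_def shift_defect_def elim: eventually_mono)
    moreover have "\<Phi> (\<lambda>n. shift_defect (B n) (C n) k) =
        shift_defect (map (\<lambda>b. b + 1) bs) (map (\<lambda>c. c - 1) cs) k"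
      unfolding B_def C_def using rep by (simp add: ultraproduct_iso_shift_defect[OF assms(2)])
    moreover have "\<dots> = \<chi> k - \<psi> k"
      using hyp k by (simp add: shift_defect_def o_def)
    ultimately show ?thesis
      using ultraproduct_iso_diff[OF assms(2) alg] by simp
  qed
  have "cc_gl n (\<chi>n n) \<and> cc_gl n (\<psi>n n)" for n
    unfolding cc_gl_def \<chi>n_def \<psi>n_def using lam(1) weight_shift_weight by blast
  moreover have "\<exists>lam. weight n lam \<and> (\<forall>k\<ge>1. \<chi>n n k = verma_cc n lam k \<and>
      \<psi>n n k = verma_cc n (shift_weight n ?r ?s lam) k)" for n
    using lam(1) by (auto simp: \<chi>n_def \<psi>n_def)
  ultimately show ?thesis
    using lim by blast
qed

end
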